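(* Fix $s>0$ and $\delta\in(0,\delta_0)$. There is a constant $C=C(s,\delta)>0$ such that for every integer $n\ge1$, every partition $\lambda=1^{n_1}2^{n_2}\cdots$ of $n$, and every integer $a$ with $a\ge\delta n^{5/4}\ge 2n$, \[ \mathsf K_{a,1}=\exp\left\{\frac{n_1^3}{12a^2}-\frac{3n_1^5}{160a^4}+R\right\}\quad\text{with } |R|\le C n^{-1/4}. \]
   Context: Let $c_1>0$ be a fixed constant such that $e^{-c_1(2a)^{-2i/3}}\le g_{a,i}\le e^{c_1(2a)^{-2i/3}}$ for all integers $a,i\ge1$ (e.g. $c_1=4$), where $g_{a,i}=\frac{2i}{(2a)^i}f_{a,i}$ and $f_{a,i}=\frac1{2i}\sum_{d\mid i,\ d\text{ odd}}\mu(d)(2a)^{i/d}$ ($\mu$ the Möbius function). For $s>0$ and $n\ge1$ let $t_n\in(0,1)$ be the unique solution in $(0,1)$ of $\frac{4t}{(1+t)^2}=e^{-s/\sqrt n}$, and $\delta_0=\left[\sup_{n\ge1}\left(n^{1/4}\log(1/t_n)e^{(c_1/4)+1}\right)\right]^{-1}$. For a partition $\lambda$ of $n$ with $n_1$ parts of size $1$ and an integer $a\ge1$, \[ \mathsf K_{a,1}=\sum_{\nu=0}^{n_1}\frac1{2^{n_1}}\binom{n_1}{\nu}\frac{(a-\nu+n_1-1)!}{(a-\nu)!\,a^{n_1-1}} \] (equivalently $\mathsf K_{a,1}=\frac{n_1!}{(2a)^{n_1}}[x^{n_1}]\left(\frac{1+x}{1-x}\right)^{a}$; it equals $1$ when $n_1=0$).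 *)

theory Defs
  imports "HOL-Analysis.Analysis" "HOL-Computational_Algebra.Squarefree" "HOL-Library.Multiset"
begin

definition moebius :: "nat \<Rightarrow> int" where
  "moebius d = (if squarefree d then (-1) ^ card (prime_factors d) else 0)"

definition f_ai :: "nat \<Rightarrow> nat \<Rightarrow> real" where
  "f_ai a i = (1 / (2 * real i)) *
     (\<Sum>d | d dvd i \<and> odd d. real_of_int (moebius d) * (2 * real a) ^ (i div d))"

definition g_ai :: "nat \<Rightarrow> nat \<Rightarrow> real" where
  "g_ai a i = (2 * real i) / (2 * real a) ^ i * f_ai a i"

definition t_n :: "real \<Rightarrow> nat \<Rightarrow> real" where
  "t_n s n = (THE t. 0 < t \<and> t < 1 \<and> 4 * t / (1 + t)^2 = exp (- s / sqrt (real n)))"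

definition delta0 :: "real \<Rightarrow> real \<Rightarrow> real" where
  "delta0 c1 s = inverse (SUP n\<in>{1::nat..}. real n powr (1/4) * ln (1 / t_n s n) * exp (c1/4 + 1))"

definition is_partition :: "nat multiset \<Rightarrow> nat \<Rightarrow> bool" where
  "is_partition lam n \<longleftrightarrow> (\<forall>x\<in>#lam. 0 < x) \<and> sum_mset lam = n"

text \<open>K_{a,1} with n1 = number of parts of size 1.\<close>
definition K_a1 :: "nat \<Rightarrow> nat \<Rightarrow> real" where
  "K_a1 a n1 = (\<Sum>\<nu>=0..n1. (1 / 2 ^ n1) * real (n1 choose \<nu>) *
      fact (a - \<nu> + n1 - 1) / (fact (a - \<nu>) * real a powi (int n1 - 1)))"

end

theory Submission
  imports Defs
begin

(*
  As a function of m = n_1, K_{a,1} satisfies (Pascal's rule and absorption applied to its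
  binomial-Pochhammer sum) the recurrence
    K_0 = K_1 = 1,   K_{j+2} = K_{j+1} + eps_{j+1} K_j,   eps_j = j (j - 1) / (4 a^2).
  Hence the ratios r_j = K_{j+1} / K_j obey r_{j+1} = 1 + eps_{j+1} / r_j, and as long as
  eps_j <= 1/2 this continued fraction pins down ln r_j = eps_j - 3/2 eps_j^2 up to
  eps_j (eps_j - eps_{j-1}) + 4 eps_j^3.  Summing over j < m with the closed forms of
  sum eps_j and sum eps_j^2 gives
    ln K_{a,1} = m^3/(12 a^2) - 3 m^5/(160 a^4) + O(m^2/a^2 + m^4/a^4 + m^7/a^6),
  and m <= n, a >= delta n^(5/4), a >= 2n turn the error into O(n^(-1/4)).
*)

section \<open>A three-term recurrence for K_a1\<close>

lemma sum_Suc_choose_pascal: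
  fixes f :: "nat \<Rightarrow> 'a::comm_ring_1"
  shows "(\<Sum>\<nu>\<le>Suc m. of_nat (Suc m choose \<nu>) * f \<nu>)
       = (\<Sum>\<nu>\<le>m. of_nat (m choose \<nu>) * (f \<nu> + f (Suc \<nu>)))"
proof -
  have shift: "(\<Sum>\<nu>\<le>Suc m. of_nat (m choose \<nu>) * f \<nu>)
      = f 0 + (\<Sum>\<nu>\<le>m. of_nat (m choose Suc \<nu>) * f (Suc \<nu>))"
    by (simp add: sum.atMost_Suc_shift del: sum.atMost_Suc)
  have "(\<Sum>\<nu>\<le>Suc m. of_nat (Suc m choose \<nu>) * f \<nu>)
      = f 0 + (\<Sum>\<nu>\<le>m. of_nat (m choose \<nu>) * f (Suc \<nu>))
        + (\<Sum>\<nu>\<le>m. of_nat (m choose Suc \<nu>) * f (Suc \<nu>))"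
    by (simp add: sum.atMost_Suc_shift sum.distrib algebra_simps del: sum.atMost_Suc)
  also have "\<dots> = (\<Sum>\<nu>\<le>m. of_nat (m choose \<nu>) * f (Suc \<nu>))
      + (\<Sum>\<nu>\<le>m. of_nat (m choose \<nu>) * f \<nu>)"
    using shift by (simp add: binomial_eq_0)
  finally show ?thesis
    by (simp add: sum.distrib algebra_simps)
qed

lemma sum_Suc_choose_absorb:
  fixes g :: "nat \<Rightarrow> 'a::comm_ring_1"
  shows "(\<Sum>\<nu>\<le>Suc p. of_nat (Suc p choose \<nu>) * (of_nat (Suc p) - 2 * of_nat \<nu>) * g \<nu>)
       = of_nat (Suc p) * (\<Sum>\<nu>\<le>p. of_nat (p choose \<nu>) * (g \<nu> - g (Suc \<nu>)))"
proof -
  have absorb_comp: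
    "of_nat (Suc p choose \<nu>) * (of_nat (Suc p) - of_nat \<nu>) = (of_nat (Suc p * (p choose \<nu>)) :: 'a)"
    if "\<nu> \<le> Suc p" for \<nu>
  proof -
    have "of_nat ((Suc p - \<nu>) * (Suc p choose \<nu>)) = (of_nat (Suc p * (p choose \<nu>)) :: 'a)"
      by (simp only: binomial_absorb_comp diff_Suc_1)
    then show ?thesis
      using that by (simp only: of_nat_mult of_nat_diff mult.commute)
  qed
  have absorb: "of_nat (Suc i) * of_nat (Suc p choose Suc i) = (of_nat (Suc p * (p choose i)) :: 'a)" for i
    by (simp only: binomial_absorption diff_Suc_1 of_nat_mult[symmetric])
  have "(\<Sum>\<nu>\<le>Suc p. of_nat (Suc p choose \<nu>) * (of_nat (Suc p) - 2 * of_nat \<nu>) * g \<nu>)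
      = (\<Sum>\<nu>\<le>Suc p. of_nat (Suc p * (p choose \<nu>)) * g \<nu>)
        - (\<Sum>\<nu>\<le>Suc p. of_nat \<nu> * of_nat (Suc p choose \<nu>) * g \<nu>)"
  proof (subst sum_subtractf[symmetric], rule sum.cong[OF refl])
    fix \<nu> assume "\<nu> \<in> {..Suc p}"
    then show "of_nat (Suc p choose \<nu>) * (of_nat (Suc p) - 2 * of_nat \<nu>) * g \<nu>
        = of_nat (Suc p * (p choose \<nu>)) * g \<nu> - of_nat \<nu> * of_nat (Suc p choose \<nu>) * g \<nu>"
      using absorb_comp[of \<nu>] by (simp add: algebra_simps del: of_nat_Suc of_nat_mult)
  qed
  also have "(\<Sum>\<nu>\<le>Suc p. of_nat \<nu> * of_nat (Suc p choose \<nu>) * g \<nu>)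
      = (\<Sum>\<nu>\<le>p. of_nat (Suc p * (p choose \<nu>)) * g (Suc \<nu>))"
    by (simp add: sum.atMost_Suc_shift absorb del: sum.atMost_Suc binomial_Suc_Suc of_nat_Suc of_nat_mult)
  also have "(\<Sum>\<nu>\<le>p. of_nat (Suc p * (p choose \<nu>)) * g (Suc \<nu>))
      = of_nat (Suc p) * (\<Sum>\<nu>\<le>p. of_nat (p choose \<nu>) * g (Suc \<nu>))"
    by (simp only: sum_distrib_left of_nat_mult mult.assoc)
  also have "(\<Sum>\<nu>\<le>Suc p. of_nat (Suc p * (p choose \<nu>)) * g \<nu>)
      = of_nat (Suc p) * (\<Sum>\<nu>\<le>p. of_nat (p choose \<nu>) * g \<nu>)"
    by (simp only: sum.atMost_Suc binomial_eq_0 lessI sum_distrib_left of_nat_mult mult.assoc) simp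
  finally show ?thesis
    by (simp only: right_diff_distrib sum_subtractf)
qed

lemma pochhammer_Suc_add_shift:
  fixes x :: "'a::comm_ring_1"
  shows "pochhammer (x + 1) (Suc k) + pochhammer x (Suc k) = (2 * x + of_nat (Suc k)) * pochhammer (x + 1) k"
  by (simp only: pochhammer_Suc[of "x + 1" k] pochhammer_rec[of x k]) (simp add: algebra_simps)

lemma pochhammer_Suc_diff_shift:
  fixes x :: "'a::comm_ring_1"
  shows "pochhammer (x + 1) (Suc k) - pochhammer x (Suc k) = of_nat (Suc k) * pochhammer (x + 1) k"
  by (simp only: pochhammer_Suc[of "x + 1" k] pochhammer_rec[of x k]) (simp add: algebra_simps)

lemma fact_add_eq_pochhammer: "fact (n + k) = fact n * pochhammer (of_nat n + 1) k"
  unfolding pochhammer_fact pochhammer_product' by (simp add: add.commute)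

definition shifted_pochhammer_sum :: "real \<Rightarrow> nat \<Rightarrow> real" where
  "shifted_pochhammer_sum A k =
     (\<Sum>\<nu>\<le>Suc k. of_nat (Suc k choose \<nu>) * pochhammer (A - of_nat \<nu> + 1) k)"

lemma shifted_pochhammer_sum_rec:
  "shifted_pochhammer_sum A (Suc (Suc k))
     = 2 * A * shifted_pochhammer_sum A (Suc k)
       + of_nat (Suc (Suc k)) * of_nat (Suc k) * shifted_pochhammer_sum A k"
proof -
  define g where "g \<nu> = pochhammer (A - of_nat \<nu> + 1) (Suc k)" for \<nu>
  let ?D = "\<Sum>\<nu>\<le>Suc (Suc k).
    of_nat (Suc (Suc k) choose \<nu>) * (of_nat (Suc (Suc k)) - 2 * of_nat \<nu>) * g \<nu>"
  have shift: "A - of_nat (Suc \<nu>) + 1 = A - of_nat \<nu>" for \<nu>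
    by simp
  have "shifted_pochhammer_sum A (Suc (Suc k))
      = (\<Sum>\<nu>\<le>Suc (Suc k). of_nat (Suc (Suc k) choose \<nu>)
           * (pochhammer (A - of_nat \<nu> + 1) (Suc (Suc k)) + pochhammer (A - of_nat \<nu>) (Suc (Suc k))))"
    unfolding shifted_pochhammer_sum_def sum_Suc_choose_pascal shift ..
  also have "\<dots> = (\<Sum>\<nu>\<le>Suc (Suc k). of_nat (Suc (Suc k) choose \<nu>)
                    * (2 * A + (of_nat (Suc (Suc k)) - 2 * of_nat \<nu>)) * g \<nu>)"
    unfolding pochhammer_Suc_add_shift g_def by (simp add: algebra_simps)
  also have "\<dots> = 2 * A * shifted_pochhammer_sum A (Suc k) + ?D"
    unfolding shifted_pochhammer_sum_def g_def sum_distrib_left sum.distrib[symmetric]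
    by (rule sum.cong[OF refl]) (simp add: algebra_simps)
  also have "?D = of_nat (Suc (Suc k)) * of_nat (Suc k) * shifted_pochhammer_sum A k"
    unfolding sum_Suc_choose_absorb g_def shift pochhammer_Suc_diff_shift shifted_pochhammer_sum_def
    by (simp add: sum_distrib_left algebra_simps)
  finally show ?thesis .
qed

definition eps :: "real \<Rightarrow> nat \<Rightarrow> real" where
  "eps A j = real j * (real j - 1) / (4 * A^2)"

lemma eps_0 [simp]: "eps A 0 = 0"
  by (simp add: eps_def)

fun Kseq :: "real \<Rightarrow> nat \<Rightarrow> real" where
  "Kseq A 0 = 1"
| "Kseq A (Suc 0) = 1"
| "Kseq A (Suc (Suc m)) = Kseq A (Suc m) + eps A (Suc m) * Kseq A m"

lemma shifted_pochhammer_sum_eq_Kseq: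
  assumes "A \<noteq> 0"
  shows "shifted_pochhammer_sum A k = 2 ^ Suc k * A ^ k * Kseq A (Suc k)"
proof (induction k rule: induct_nat_012)
  case 0
  show ?case by (simp add: shifted_pochhammer_sum_def)
next
  case 1
  show ?case by (simp add: shifted_pochhammer_sum_def eps_def numeral_2_eq_2 algebra_simps)
next
  case (ge2 k)
  have "shifted_pochhammer_sum A (Suc (Suc k))
      = 2 * A * (2 ^ Suc (Suc k) * A ^ Suc k * Kseq A (Suc (Suc k)))
        + of_nat (Suc (Suc k)) * of_nat (Suc k) * (2 ^ Suc k * A ^ k * Kseq A (Suc k))"
    using ge2 by (simp only: shifted_pochhammer_sum_rec)
  also have "\<dots> = 2 ^ Suc (Suc (Suc k)) * A ^ Suc (Suc k) * Kseq A (Suc (Suc (Suc k)))"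
    using assms by (simp add: eps_def field_simps power2_eq_square)
  finally show ?case .
qed

lemma K_a1_eq_Kseq:
  assumes "1 \<le> a" and "m \<le> a"
  shows "K_a1 a m = Kseq (real a) m"
proof (cases m)
  case 0
  have "(fact a :: real) = real a * fact (a - 1)"
    using assms by (simp add: fact_reduce)
  then show ?thesis
    using 0 assms by (simp add: K_a1_def)
next
  case (Suc k)
  have "K_a1 a m = shifted_pochhammer_sum (real a) k / (2 ^ Suc k * real a ^ k)"
    unfolding K_a1_def shifted_pochhammer_sum_def Suc atLeast0AtMost sum_divide_distrib
  proof (rule sum.cong[OF refl])
    fix \<nu> assume "\<nu> \<in> {..Suc k}"
    then have "\<nu> \<le> a"
      using assms Suc by auto
    then have "fact (a - \<nu> + Suc k - 1) = (fact (a - \<nu>) :: real) * pochhammer (real a - real \<nu> + 1) k"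
      using fact_add_eq_pochhammer[of "a - \<nu>" k, where 'a = real]
      by (simp only: diff_Suc_1 add_Suc_right of_nat_diff)
    then show "1 / 2 ^ Suc k * real (Suc k choose \<nu>) * fact (a - \<nu> + Suc k - 1)
          / (fact (a - \<nu>) * real a powi (int (Suc k) - 1))
        = of_nat (Suc k choose \<nu>) * pochhammer (real a - of_nat \<nu> + 1) k / (2 ^ Suc k * real a ^ k)"
      by (simp add: power_int_def)
  qed
  also have "\<dots> = Kseq (real a) m"
    using assms Suc by (simp add: shifted_pochhammer_sum_eq_Kseq)
  finally show ?thesis .
qed

section \<open>The continued fraction of consecutive ratios\<close>

lemma ln_add_one_ge_quadratic:
  fixes x :: real
  assumes "0 \<le> x"
  shows "x - x^2 / 2 \<le> ln (1 + x)"
proof -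
  let ?f = "\<lambda>t::real. ln (1 + t) - t + t^2 / 2"
  have "?f 0 \<le> ?f x"
  proof (rule DERIV_nonneg_imp_nondecreasing[OF assms])
    fix t :: real
    assume t: "0 \<le> t" "t \<le> x"
    have "(?f has_real_derivative (1 / (1 + t) - 1 + t)) (at t)"
      using t by (auto intro!: derivative_eq_intros simp: power2_eq_square field_simps)
    moreover have "1 / (1 + t) - 1 + t = t^2 / (1 + t)"
      using t by (simp add: field_simps power2_eq_square)
    ultimately show "\<exists>y. (?f has_real_derivative y) (at t) \<and> y \<ge> 0"
      using t by auto
  qed
  then show ?thesis by simp
qed

lemma ln_add_one_le_cubic:
  fixes x :: real
  assumes "0 \<le> x"
  shows "ln (1 + x) \<le> x - x^2 / 2 + x^3 / 3"
proof -
  let ?f = "\<lambda>t::real. t - t^2 / 2 + t^3 / 3 - ln (1 + t)"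
  have "?f 0 \<le> ?f x"
  proof (rule DERIV_nonneg_imp_nondecreasing[OF assms])
    fix t :: real
    assume t: "0 \<le> t" "t \<le> x"
    have "(?f has_real_derivative (1 - t + t^2 - 1 / (1 + t))) (at t)"
      using t by (auto intro!: derivative_eq_intros simp: power2_eq_square field_simps)
    moreover have "1 - t + t^2 - 1 / (1 + t) = t^3 / (1 + t)"
      using t by (simp add: field_simps power2_eq_square power3_eq_cube)
    ultimately show "\<exists>y. (?f has_real_derivative y) (at t) \<and> y \<ge> 0"
      using t by auto
  qed
  then show ?thesis by simp
qed

lemma continued_fraction_step_bounds:
  fixes e e' r :: real
  assumes "0 \<le> e" "e \<le> e'" "e' \<le> 1/2" "e - e^2 \<le> r" "r \<le> e"
  shows "e' - e' * e \<le> e' / (1 + r)"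
    and "e' / (1 + r) \<le> e'"
    and "e' / (1 + r) \<le> e' - e' * e + 2 * e'^3"
proof -
  have "e^2 \<le> e" using assms by (simp add: power2_eq_square mult_left_le_one_le)
  then have r: "0 \<le> r" "r \<le> 1/2" using assms by linarith+
  have e': "0 \<le> e'" using assms by linarith
  have "e' * (1 - r) * (1 + r) \<le> e'"
    using e' by (simp add: algebra_simps flip: power2_eq_square)
  then have "e' * (1 - r) \<le> e' / (1 + r)"
    using r by (simp add: le_divide_eq)
  moreover have "e' * (1 - e) \<le> e' * (1 - r)"
    using e' assms by (intro mult_left_mono) auto
  ultimately show "e' - e' * e \<le> e' / (1 + r)"
    by (simp add: algebra_simps)
  show "e' / (1 + r) \<le> e'"
    using e' r by (simp add: divide_le_eq mult_le_cancel_left1)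
  have "e' \<le> e' * (1 - r + r^2) * (1 + r)"
    using e' r by (simp add: algebra_simps power2_eq_square power3_eq_cube)
  then have "e' / (1 + r) \<le> e' * (1 - r + r^2)"
    using r by (simp add: divide_le_eq)
  also have "\<dots> \<le> e' * (1 - e + 2 * e^2)"
  proof -
    have "r^2 \<le> e^2" using r assms by (simp add: power_mono)
    then show ?thesis using e' assms by (intro mult_left_mono) auto
  qed
  also have "\<dots> \<le> e' - e' * e + 2 * e'^3"
    using e' assms by (simp add: algebra_simps power3_eq_cube power2_eq_square mult_mono)
  finally show "e' / (1 + r) \<le> e' - e' * e + 2 * e'^3" .
qed

lemma ln_add_one_approx_in_bracket:
  fixes e e' r :: real
  assumes "0 \<le> e" "e \<le> e'" "e' \<le> 1/2"
    and "e' - e' * e \<le> r" "r \<le> e'" "r \<le> e' - e' * e + 2 * e'^3"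
  shows "\<bar>ln (1 + r) - (e' - 3/2 * e'^2)\<bar> \<le> e' * (e' - e) + 4 * e'^3"
proof -
  have e': "0 \<le> e'" using assms by linarith
  have "e' * e \<le> e'^2" "e'^2 \<le> e'"
    using assms e' by (auto simp: power2_eq_square intro: mult_left_mono mult_left_le_one_le)
  then have lower: "e' - e'^2 \<le> r" "0 \<le> e' - e'^2"
    using assms by linarith+
  then have r: "0 \<le> r" by linarith
  have "(e' - e'^2)^2 = e'^2 - 2 * e'^3 + e'^4"
    by (simp add: power2_eq_square power3_eq_cube power4_eq_xxxx algebra_simps)
  then have "e'^2 - 2 * e'^3 \<le> (e' - e'^2)^2"
    using e' by simp
  also have "\<dots> \<le> r^2"
    using lower by (simp add: power_mono)
  finally have sq: "e'^2 - 2 * e'^3 \<le> r^2" .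
  have cube: "r^3 \<le> e'^3"
    using r assms by (simp add: power_mono)
  have diff: "e' * (e' - e) = e'^2 - e' * e"
    by (simp add: power2_eq_square algebra_simps)
  have nonneg: "0 \<le> e' * (e' - e)" "0 \<le> e'^3"
    using assms e' by simp_all
  have "ln (1 + r) \<le> r - r^2 / 2 + r^3 / 3"
    using r by (rule ln_add_one_le_cubic)
  moreover have "r - r^2 / 2 \<le> ln (1 + r)"
    using r by (rule ln_add_one_ge_quadratic)
  moreover have "r^2 \<le> e'^2"
    using r assms by (simp add: power_mono)
  ultimately show ?thesis
    using assms sq cube diff nonneg by (simp add: abs_le_iff)
qed

lemma eps_nonneg: "0 \<le> eps A j"
  by (cases j) (simp_all add: eps_def)

lemma eps_mono:
  assumes "i \<le> j"
  shows "eps A i \<le> eps A j"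
proof (cases i)
  case (Suc k)
  have "real i * (real i - 1) \<le> real j * (real j - 1)"
    using assms Suc by (intro mult_mono) auto
  then show ?thesis
    unfolding eps_def by (simp add: divide_right_mono)
qed (simp add: eps_nonneg)

lemma Kseq_pos: "0 < Kseq A m"
  by (induction A m rule: Kseq.induct) (simp_all add: add_pos_nonneg eps_nonneg)

definition ratio_excess :: "real \<Rightarrow> nat \<Rightarrow> real" where
  "ratio_excess A j = Kseq A (Suc j) / Kseq A j - 1"

lemma ratio_excess_0 [simp]: "ratio_excess A 0 = 0"
  by (simp add: ratio_excess_def)

lemma ratio_excess_Suc: "ratio_excess A (Suc j) = eps A (Suc j) / (1 + ratio_excess A j)"
  using Kseq_pos[of A j] Kseq_pos[of A "Suc j"]
  by (cases j) (simp_all add: ratio_excess_def field_simps)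

lemma ln_Kseq_eq_sum: "ln (Kseq A m) = (\<Sum>j<m. ln (1 + ratio_excess A j))"
proof (induction m)
  case (Suc m)
  have "ln (1 + ratio_excess A m) = ln (Kseq A (Suc m)) - ln (Kseq A m)"
    using Kseq_pos[of A m] Kseq_pos[of A "Suc m"] by (simp add: ratio_excess_def ln_div)
  then show ?case
    using Suc by simp
qed simp

lemma ratio_excess_bounds:
  assumes "eps A j \<le> 1/2"
  shows "eps A j - (eps A j)^2 \<le> ratio_excess A j \<and> ratio_excess A j \<le> eps A j"
  using assms
proof (induction j)
  case (Suc j)
  let ?e = "eps A j" and ?e' = "eps A (Suc j)"
  have step: "0 \<le> ?e" "?e \<le> ?e'"
    by (simp_all add: eps_nonneg eps_mono)
  then have "?e - ?e^2 \<le> ratio_excess A j" "ratio_excess A j \<le> ?e"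
    using Suc by auto
  note bounds = continued_fraction_step_bounds[OF step Suc.prems this]
  have "?e' * ?e \<le> ?e'^2"
    using step by (simp add: power2_eq_square mult_left_mono)
  then show ?case
    using bounds by (simp add: ratio_excess_Suc)
qed simp

lemma ln_one_plus_ratio_excess_approx:
  assumes "eps A j \<le> 1/2"
  shows "\<bar>ln (1 + ratio_excess A j) - (eps A j - 3/2 * (eps A j)^2)\<bar>
           \<le> eps A j * (eps A j - eps A (j - 1)) + 4 * (eps A j)^3"
proof (cases j)
  case (Suc i)
  let ?e = "eps A i" and ?e' = "eps A (Suc i)"
  have step: "0 \<le> ?e" "?e \<le> ?e'" "?e' \<le> 1/2"
    using assms Suc by (simp_all add: eps_nonneg eps_mono)
  have "?e - ?e^2 \<le> ratio_excess A i" "ratio_excess A i \<le> ?e"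
    using ratio_excess_bounds[of A i] step by auto
  note bounds = continued_fraction_step_bounds[OF step this]
  show ?thesis
    using ln_add_one_approx_in_bracket[OF step bounds] Suc by (simp add: ratio_excess_Suc)
qed simp

section \<open>Summing the local errors\<close>

lemma sum_of_nat_times_pred:
  "(\<Sum>j<m. real j * (real j - 1)) = real m * (real m - 1) * (real m - 2) / 3"
  by (induction m) (simp_all add: field_simps)

lemma sum_of_nat_times_pred_squared:
  "(\<Sum>j<m. (real j * (real j - 1))^2)
     = (6 * real m^5 - 30 * real m^4 + 50 * real m^3 - 30 * real m^2 + 4 * real m) / 30"
proof (induction m)
  case (Suc m)
  have "(6 * x^5 - 30 * x^4 + 50 * x^3 - 30 * x^2 + 4 * x) + 30 * (x * (x - 1))^2
      = 6 * (1 + x)^5 - 30 * (1 + x)^4 + 50 * (1 + x)^3 - 30 * (1 + x)^2 + 4 * (1 + x)" for x :: real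
    by algebra
  from this[of "real m"] show ?case
    unfolding sum.lessThan_Suc Suc.IH of_nat_Suc by argo
qed simp

lemma of_nat_power_le_power:
  assumes "0 < i" "i \<le> j"
  shows "real m ^ i \<le> real m ^ j"
  using assms by (cases m) (auto intro: power_increasing simp: power_0_left)

lemma count_mult_le_sum_mset: "count M x * x \<le> sum_mset (M :: nat multiset)"
  by (induction M) auto

lemma sum_eps: "(\<Sum>j<m. eps A j) = real m * (real m - 1) * (real m - 2) / (12 * A^2)"
  by (simp add: eps_def sum_of_nat_times_pred flip: sum_divide_distrib)

lemma sum_eps_squared:
  "(\<Sum>j<m. (eps A j)^2)
     = (6 * real m^5 - 30 * real m^4 + 50 * real m^3 - 30 * real m^2 + 4 * real m) / (480 * A^4)"
proof -
  have "(eps A j)^2 = (real j * (real j - 1))^2 / (16 * A^4)" for j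
    by (simp add: eps_def power_divide power_mult_distrib flip: power_mult)
  then show ?thesis
    by (simp add: sum_of_nat_times_pred_squared flip: sum_divide_distrib)
qed

lemma sum_eps_approx:
  assumes "A \<noteq> 0"
  shows "\<bar>(\<Sum>j<m. eps A j - 3/2 * (eps A j)^2) - (real m^3 / (12 * A^2) - 3 * real m^5 / (160 * A^4))\<bar>
           \<le> real m^2 / (4 * A^2) + 3 * real m^4 / (8 * A^4)"
proof -
  let ?M = "real m"
  have "(\<Sum>j<m. eps A j - 3/2 * (eps A j)^2) = (\<Sum>j<m. eps A j) - 3/2 * (\<Sum>j<m. (eps A j)^2)"
    by (simp add: sum_subtractf sum_distrib_left)
  also have "\<dots> = ?M^3 / (12 * A^2) - 3 * ?M^5 / (160 * A^4)
      + (2 * ?M - 3 * ?M^2) / (12 * A^2) - (4 * ?M - 30 * ?M^2 + 50 * ?M^3 - 30 * ?M^4) / (320 * A^4)"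
    unfolding sum_eps sum_eps_squared using assms
    by (simp add: field_simps power2_eq_square power3_eq_cube)
  finally have diff: "(\<Sum>j<m. eps A j - 3/2 * (eps A j)^2) - (?M^3 / (12 * A^2) - 3 * ?M^5 / (160 * A^4))
      = (2 * ?M - 3 * ?M^2) / (12 * A^2) - (4 * ?M - 30 * ?M^2 + 50 * ?M^3 - 30 * ?M^4) / (320 * A^4)"
    by simp
  have powers: "?M \<le> ?M^2" "?M \<le> ?M^4" "?M^2 \<le> ?M^4" "?M^3 \<le> ?M^4"
    using of_nat_power_le_power[of 1 2 m] of_nat_power_le_power[of 1 4 m]
      of_nat_power_le_power[of 2 4 m] of_nat_power_le_power[of 3 4 m]
    by simp_all
  have nonneg: "0 \<le> ?M" "0 \<le> ?M^2" "0 \<le> ?M^3"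
    by simp_all
  have "\<bar>2 * ?M - 3 * ?M^2\<bar> \<le> 3 * ?M^2"
    unfolding abs_le_iff using powers nonneg by (intro conjI; linarith)
  moreover have "\<bar>4 * ?M - 30 * ?M^2 + 50 * ?M^3 - 30 * ?M^4\<bar> \<le> 120 * ?M^4"
    unfolding abs_le_iff using powers nonneg by (intro conjI; linarith)
  ultimately have "\<bar>2 * ?M - 3 * ?M^2\<bar> / (12 * A^2)
      + \<bar>4 * ?M - 30 * ?M^2 + 50 * ?M^3 - 30 * ?M^4\<bar> / (320 * A^4)
      \<le> 3 * ?M^2 / (12 * A^2) + 120 * ?M^4 / (320 * A^4)"
    by (intro add_mono divide_right_mono) auto
  then show ?thesis
    unfolding diff by (intro order_trans[OF abs_triangle_ineq4]) (simp add: abs_divide abs_mult)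
qed

lemma eps_le_square:
  assumes "j \<le> m"
  shows "eps A j \<le> real m^2 / (4 * A^2)"
proof -
  have "eps A m \<le> real m^2 / (4 * A^2)"
    unfolding eps_def by (intro divide_right_mono) (auto simp: power2_eq_square algebra_simps)
  then show ?thesis
    using eps_mono[OF assms, of A] by linarith
qed

lemma eps_diff_le: "eps A j - eps A (j - 1) \<le> real j / (2 * A^2)"
proof (cases j)
  case (Suc i)
  then have "eps A j - eps A (j - 1) = real i / (2 * A^2)"
    by (simp add: eps_def diff_divide_distrib[symmetric] algebra_simps)
  then show ?thesis
    using Suc by (simp add: divide_right_mono)
qed simp

lemma ln_one_plus_ratio_excess_error:
  assumes "0 < A" "2 * real m \<le> A" "j < m"
  shows "\<bar>ln (1 + ratio_excess A j) - (eps A j - 3/2 * (eps A j)^2)\<bar>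
           \<le> real m^3 / (8 * A^4) + real m^6 / (16 * A^6)"
proof -
  let ?M = "real m"
  have eps_le: "eps A j \<le> ?M^2 / (4 * A^2)"
    using eps_le_square assms by simp
  have "?M^2 / (4 * A^2) \<le> A^2 / (4 * A^2)"
    using assms by (intro divide_right_mono power_mono) auto
  also have "\<dots> = 1/4"
    using assms by simp
  finally have "\<bar>ln (1 + ratio_excess A j) - (eps A j - 3/2 * (eps A j)^2)\<bar>
      \<le> eps A j * (eps A j - eps A (j - 1)) + 4 * (eps A j)^3"
    using eps_le by (intro ln_one_plus_ratio_excess_approx) linarith
  also have "\<dots> \<le> (?M^2 / (4 * A^2)) * (?M / (2 * A^2)) + 4 * (?M^2 / (4 * A^2))^3"
  proof (intro add_mono mult_mono mult_left_mono power_mono)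
    show "eps A j - eps A (j - 1) \<le> ?M / (2 * A^2)"
      using eps_diff_le[of A j] divide_right_mono[of "real j" ?M "2 * A^2"] assms by simp
  qed (use eps_le eps_nonneg eps_mono[of "j - 1" j A] in auto)
  also have "\<dots> = ?M^3 / (8 * A^4) + ?M^6 / (16 * A^6)"
    by (simp add: eval_nat_numeral mult.assoc)
  finally show ?thesis .
qed

lemma ln_Kseq_approx:
  assumes "0 < A" "2 * real m \<le> A"
  shows "\<bar>ln (Kseq A m) - (real m^3 / (12 * A^2) - 3 * real m^5 / (160 * A^4))\<bar>
           \<le> real m^2 / (4 * A^2) + real m^4 / (2 * A^4) + real m^7 / (16 * A^6)"
proof -
  let ?M = "real m" and ?Q = "\<lambda>j. eps A j - 3/2 * (eps A j)^2"
  have "\<bar>ln (Kseq A m) - (\<Sum>j<m. ?Q j)\<bar> \<le> (\<Sum>j<m. \<bar>ln (1 + ratio_excess A j) - ?Q j\<bar>)"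
    unfolding ln_Kseq_eq_sum sum_subtractf[symmetric] by (rule sum_abs)
  also have "\<dots> \<le> ?M * (?M^3 / (8 * A^4) + ?M^6 / (16 * A^6))"
    using sum_bounded_above[of "{..<m}", OF ln_one_plus_ratio_excess_error[OF assms]] by simp
  also have "\<dots> = ?M^4 / (8 * A^4) + ?M^7 / (16 * A^6)"
    by (simp add: field_simps flip: power_Suc)
  finally have "\<bar>ln (Kseq A m) - (\<Sum>j<m. ?Q j)\<bar> \<le> ?M^4 / (8 * A^4) + ?M^7 / (16 * A^6)" .
  moreover have "\<bar>(\<Sum>j<m. ?Q j) - (?M^3 / (12 * A^2) - 3 * ?M^5 / (160 * A^4))\<bar>
      \<le> ?M^2 / (4 * A^2) + 3 * ?M^4 / (8 * A^4)"
    using assms by (intro sum_eps_approx) simp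
  ultimately show ?thesis
    by (simp add: abs_le_iff)
qed

lemma Kseq_error_le_powr:
  fixes \<delta> A :: real
  assumes "0 < \<delta>" "1 \<le> n" "m \<le> n" "\<delta> * real n powr (5/4) \<le> A" "2 * real n \<le> A"
  shows "real m^2 / (4 * A^2) + real m^4 / (2 * A^4) + real m^7 / (16 * A^6)
           \<le> (1/\<delta> + 1/\<delta>^6) * real n powr (- 1/4)"
proof -
  define t where "t = real n powr (- 1/4)"
  define v where "v = real m / A"
  define w where "w = real n / A"
  have n: "0 < real n" and A: "0 < A"
    using assms by simp_all
  have t: "0 < t" "t \<le> 1" "t^4 * real n = 1"
  proof -
    show "0 < t" "t \<le> 1"
      using n powr_mono[of "- 1/4" 0 "real n"] assms by (simp_all add: t_def)
    have "t^4 = real n powr (- 1)"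
      using n by (simp add: t_def powr_power)
    then show "t^4 * real n = 1"
      using n by (simp add: powr_minus)
  qed
  have "\<delta> * real n \<le> A * t"
  proof -
    have "real n powr (5/4) * t = real n"
      using n by (simp add: t_def flip: powr_add)
    moreover have "\<delta> * real n powr (5/4) * t \<le> A * t"
      using assms t by (intro mult_right_mono) auto
    ultimately show ?thesis
      by (simp add: mult.assoc)
  qed
  then have w: "0 \<le> w" "w \<le> 1/2" "w \<le> t / \<delta>"
    using assms A by (auto simp: w_def field_simps)
  have v: "0 \<le> v" "v \<le> w"
    using assms A by (auto simp: v_def w_def divide_right_mono)
  have "v^2 / 4 + v^4 / 2 \<le> w^2 / 4 + w^2 / 8"
  proof -
    have "w^2 \<le> (1/2)^2"
      using w by (intro power_mono) auto
    then have "w^2 * w^2 \<le> w^2 * (1/4)"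
      by (intro mult_left_mono) (auto simp: power_divide)
    then have "w^4 \<le> w^2 / 4"
      by (simp flip: power_add)
    moreover have "v^2 \<le> w^2" "v^4 \<le> w^4"
      using v by (simp_all add: power_mono)
    ultimately show ?thesis
      by linarith
  qed
  also have "\<dots> \<le> t / \<delta>"
  proof -
    have "w^2 \<le> w * (1/2)"
      unfolding power2_eq_square using w by (intro mult_left_mono) auto
    then show ?thesis
      using w by linarith
  qed
  finally have low_order: "v^2 / 4 + v^4 / 2 \<le> t / \<delta>" .
  have "v^6 * real m \<le> w^6 * real n"
    using v assms by (intro mult_mono power_mono) auto
  also have "\<dots> \<le> (t / \<delta>)^6 * real n"
    using w n by (intro mult_right_mono power_mono) auto
  also have "\<dots> = t^2 * (t^4 * real n) / \<delta>^6"
    by (simp add: power_divide field_simps flip: power_add)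
  also have "\<dots> = t^2 / \<delta>^6"
    using t by simp
  also have "\<dots> \<le> t / \<delta>^6"
    using t assms by (intro divide_right_mono) (auto simp: power2_eq_square mult_left_le_one_le)
  finally have high_order: "v^6 * real m \<le> t / \<delta>^6" .
  have "0 \<le> t / \<delta>^6"
    using t assms by simp
  have "real m^2 / (4 * A^2) + real m^4 / (2 * A^4) + real m^7 / (16 * A^6)
      = v^2 / 4 + v^4 / 2 + v^6 * real m / 16"
    by (simp add: v_def power_divide field_simps flip: power_Suc)
  also have "\<dots> \<le> t / \<delta> + t / \<delta>^6"
    using low_order high_order \<open>0 \<le> t / \<delta>^6\<close> by linarith
  also have "\<dots> = (1/\<delta> + 1/\<delta>^6) * real n powr (- 1/4)"
    by (simp add: t_def field_simps)
  finally show ?thesis .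
qed

theorem lemma3p5:
  fixes c1 s \<delta> :: real
  assumes c1_pos: "c1 > 0"
    and c1_bound: "\<And>a i. a \<ge> 1 \<Longrightarrow> i \<ge> 1 \<Longrightarrow>
        exp (- c1 * (2 * real a) powr (- 2 * real i / 3)) \<le> g_ai a i \<and>
        g_ai a i \<le> exp (c1 * (2 * real a) powr (- 2 * real i / 3))"
    and s_pos: "s > 0"
    and delta_pos: "0 < \<delta>" and delta_lt: "\<delta> < delta0 c1 s"
  shows "\<exists>C>0. \<forall>n::nat. \<forall>lam a::nat. n \<ge> 1 \<longrightarrow> is_partition lam n \<longrightarrow>
      real a \<ge> \<delta> * real n powr (5/4) \<longrightarrow> \<delta> * real n powr (5/4) \<ge> 2 * real n \<longrightarrow>
      (\<exists>R. K_a1 a (count lam 1) =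
              exp (real (count lam 1) ^ 3 / (12 * real a ^ 2)
                   - 3 * real (count lam 1) ^ 5 / (160 * real a ^ 4) + R)
           \<and> \<bar>R\<bar> \<le> C * real n powr (- 1/4))"
proof (rule exI[of _ "1/\<delta> + 1/\<delta>^6"], intro conjI allI impI)
  show "0 < 1/\<delta> + 1/\<delta>^6"
    using delta_pos by (simp add: add_pos_pos)
  fix n a :: nat and lam :: "nat multiset"
  assume n: "n \<ge> 1" and lam: "is_partition lam n"
    and a: "real a \<ge> \<delta> * real n powr (5/4)" and two_n_le: "\<delta> * real n powr (5/4) \<ge> 2 * real n"
  define m where "m = count lam 1"
  define main where "main = real m ^ 3 / (12 * real a ^ 2) - 3 * real m ^ 5 / (160 * real a ^ 4)"
  have "m \<le> n"
    using lam count_mult_le_sum_mset[of lam 1] by (simp add: m_def is_partition_def)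
  then have m_a: "2 * real m \<le> real a" "m \<le> a" "1 \<le> a"
    using n a two_n_le by linarith+
  have "K_a1 a m = exp (main + (ln (Kseq (real a) m) - main))"
    using m_a by (simp add: K_a1_eq_Kseq Kseq_pos)
  moreover have "\<bar>ln (Kseq (real a) m) - main\<bar> \<le> (1/\<delta> + 1/\<delta>^6) * real n powr (- 1/4)"
    using ln_Kseq_approx[of "real a" m] Kseq_error_le_powr[OF delta_pos n \<open>m \<le> n\<close> a] m_a a two_n_le
    unfolding main_def by fastforce
  ultimately show "\<exists>R. K_a1 a (count lam 1) = exp (real (count lam 1) ^ 3 / (12 * real a ^ 2)
                   - 3 * real (count lam 1) ^ 5 / (160 * real a ^ 4) + R)
           \<and> \<bar>R\<bar> \<le> (1/\<delta> + 1/\<delta>^6) * real n powr (- 1/4)"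
    unfolding m_def main_def by blast
qed

end
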